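(* Let $0<r<1$, let $(\alpha,s)$ be admissible and $\eta>0$. Then there is no Borel probability measure $\mu$ on $\mathbb{R}$ whose Cauchy transform $G_\mu(z)=\int\frac{\mu(dx)}{z-x}$ coincides with $G^{\alpha}_{s,r}$ on a set $\Gamma_{\eta,M}$ (for any $M>0$ for which $G^\alpha_{s,r}$ is defined there).
   Context: Branch conventions: for $w\in\mathbb{C}\setminus[0,\infty)$ and $p\in\{\alpha,1/\alpha\}$, $w^{p}:=e^{p\log_{(1)}w}$, where $\log_{(1)}$ is the branch of the logarithm with imaginary part in $(0,2\pi)$; for $w\in\mathbb{C}\setminus(-\infty,0]$, $w^{1/r}:=e^{\frac1r\operatorname{Log}w}$ (principal logarithm); $r^{1/\alpha}>0$. $\Gamma_{\eta,M}=\{z\in\mathbb{C}:\operatorname{Im}z>M,\ \operatorname{Im}z>\eta|\operatorname{Re}z|\}$. For $0<\alpha\le2$, $r>0$, $s\in\mathbb{C}\setminus\{0\}$, \[ G^{\alpha}_{s,r}(z)=-r^{1/\alpha}\left(\frac{1-\big(1-s(-\tfrac1z)^{\alpha}\big)^{1/r}}{s}\right)^{1/\alpha}, \] which is well defined and analytic on $\Gamma_{\eta,M}$ for $M$ large enough depending on $(\eta,s,r)$. A pair $(\alpha,s)$ ($\arg s\in(-\pi,\pi]$) is admissible if either $0<\alpha\le1$ and $(1-\alpha)\pi\le\arg s\le\pi$, or $1<\alpha\le2$ and $0\le\arg s\le(2-\alpha)\pi$. *)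

theory Defs
  imports "HOL-Analysis.Analysis" "HOL-Probability.Probability"
begin

text \<open>Branch of the logarithm with imaginary part in (0, 2 pi), used on the complement of
  [0, infinity). (Its value on [0, infinity) is irrelevant.)\<close>
definition log1 :: "complex \<Rightarrow> complex" where
  "log1 w = (if Im w \<ge> 0 then Ln w else Ln w + 2 * pi * \<i>)"

definition pow1 :: "complex \<Rightarrow> real \<Rightarrow> complex" where
  "pow1 w p = exp (complex_of_real p * log1 w)"

definition powP :: "complex \<Rightarrow> real \<Rightarrow> complex" where
  "powP w p = exp (complex_of_real p * Ln w)"

definition Gasr :: "real \<Rightarrow> complex \<Rightarrow> real \<Rightarrow> complex \<Rightarrow> complex" where
  "Gasr \<alpha> s r z =
     - complex_of_real (r powr (1 / \<alpha>)) *
       pow1 ((1 - powP (1 - s * pow1 (- 1 / z) \<alpha>) (1 / r)) / s) (1 / \<alpha>)"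

definition Gamma_cone :: "real \<Rightarrow> real \<Rightarrow> complex set" where
  "Gamma_cone \<eta> M = {z. Im z > M \<and> Im z > \<eta> * \<bar>Re z\<bar>}"

definition admissible :: "real \<Rightarrow> complex \<Rightarrow> bool" where
  "admissible \<alpha> s \<longleftrightarrow> s \<noteq> 0 \<and>
     ((0 < \<alpha> \<and> \<alpha> \<le> 1 \<and> (1 - \<alpha>) * pi \<le> Arg s \<and> Arg s \<le> pi) \<or>
      (1 < \<alpha> \<and> \<alpha> \<le> 2 \<and> 0 \<le> Arg s \<and> Arg s \<le> (2 - \<alpha>) * pi))"

definition cauchy_transform :: "real measure \<Rightarrow> complex \<Rightarrow> complex" where
  "cauchy_transform \<mu> z = integral\<^sup>L \<mu> (\<lambda>x. 1 / (z - complex_of_real x))"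

end

theory Submission
  imports Defs
begin

(*
  For a probability measure mu and y > 0 the kernel iy/(iy - x) lies on the circle
  |w - 1/2| = 1/2, so iy G_mu(iy) lies in the closed disk |w - 1/2| <= 1/2.  On the
  imaginary axis G^alpha_{s,r} is explicit: iy G(iy) = h(t)^(1/alpha) with
  t = y^(-alpha) tau, tau = s e^(i alpha pi/2), h(t) = r (1 - (1 - t)^(1/r)) / t, and the
  binomial series gives h(t) = 1 - a t + b t^2 + O(t^3) with a = (1/r - 1)/2 > 0.
  Admissibility puts tau in the open left half plane, or makes alpha = 1 and tau purely
  imaginary.  In the first case Re (h^(1/alpha) - 1) ~ -(a/alpha) Re t > 0, in the
  second Re (h - 1) + |h - 1|^2 ~ (a^2 - b) |t|^2 > 0 (this uses r < 1); either way
  h(t)^(1/alpha) leaves the closed disk for all small t, i.e. for all large y, and such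
  points iy lie in every cone Gamma_{eta,M}.
*)

subsection \<open>Elementary estimates: binomial series and logarithm\<close>

lemma norm_gchoose_le:
  fixes c :: real
  shows "norm ((complex_of_real c) gchoose n) \<le> (max 1 \<bar>c\<bar>) ^ n"
proof (induction n)
  case 0 then show ?case by simp
next
  case (Suc k)
  let ?K = "max 1 \<bar>c\<bar>"
  have rec: "(complex_of_real c) gchoose (Suc k)
      = ((complex_of_real c) gchoose k) * (complex_of_real c - of_nat k) / of_nat (Suc k)"
    using gbinomial_mult_1[of "complex_of_real c" k]
    by (simp add: field_simps del: of_nat_Suc)
  have "norm (complex_of_real c - of_nat k) \<le> \<bar>c\<bar> + k"
    by (metis norm_of_real norm_of_nat norm_triangle_ineq4 of_real_of_nat_eq)
  also have "\<bar>c\<bar> + k \<le> ?K * Suc k"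
    using mult_right_mono[of 1 ?K "real k"] by (simp add: algebra_simps)
  finally have factor: "norm (complex_of_real c - of_nat k) / Suc k \<le> ?K"
    by (simp add: divide_le_eq del: of_nat_Suc)
  have "norm ((complex_of_real c) gchoose (Suc k))
      = norm ((complex_of_real c) gchoose k) * (norm (complex_of_real c - of_nat k) / Suc k)"
    unfolding rec by (simp add: norm_mult norm_divide del: of_nat_Suc)
  also have "\<dots> \<le> ?K ^ k * ?K"
    using Suc.IH factor by (intro mult_mono) auto
  finally show ?case by (simp add: mult.commute)
qed

lemma binomial_remainder:
  fixes c :: real and z :: complex
  defines "K \<equiv> max 1 \<bar>c\<bar>"
  assumes z: "norm z \<le> 1 / (2 * K)"
  shows "norm ((1 + z) powr (complex_of_real c) - (\<Sum>n<N. ((complex_of_real c) gchoose n) * z ^ n))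
           \<le> 2 * K ^ N * norm z ^ N"
proof -
  have K1: "K \<ge> 1" unfolding K_def by simp
  have zK: "norm z * K \<le> 1/2" using z K1 by (simp add: field_simps)
  have "norm z \<le> norm z * K" using K1 mult_left_mono[of 1 K "norm z"] by simp
  hence "norm z < 1" using zK by linarith
  from sums_split_initial_segment[OF gen_binomial_complex[OF this, of "complex_of_real c"], of N]
  have tail: "(\<lambda>i. (complex_of_real c gchoose (i + N)) * z ^ (i + N)) sums
      ((1 + z) powr (complex_of_real c) - (\<Sum>n<N. ((complex_of_real c) gchoose n) * z ^ n))" .
  have term_le: "norm ((complex_of_real c gchoose (i + N)) * z ^ (i + N)) \<le> (K * norm z) ^ N * (1/2) ^ i"
    for i
  proof -
    have "norm ((complex_of_real c gchoose (i + N)) * z ^ (i + N)) \<le> K ^ (i+N) * norm z ^ (i + N)"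
      unfolding norm_mult norm_power using norm_gchoose_le[of c "i+N"] K_def
      by (intro mult_right_mono) auto
    also have "\<dots> = (K * norm z) ^ N * (K * norm z) ^ i"
      by (simp add: power_add power_mult_distrib)
    also have "\<dots> \<le> (K * norm z) ^ N * (1/2) ^ i"
      using zK K1 by (intro mult_left_mono power_mono) (auto simp: mult.commute)
    finally show ?thesis .
  qed
  have "summable (\<lambda>i. (K * norm z) ^ N * (1/2::real) ^ i)"
    by (intro summable_mult summable_geometric) auto
  from norm_suminf_le[OF term_le this] tail
  have "norm ((1 + z) powr (complex_of_real c) - (\<Sum>n<N. ((complex_of_real c) gchoose n) * z ^ n))
      \<le> (\<Sum>i. (K * norm z) ^ N * (1/2::real) ^ i)"
    by (simp add: sums_iff)
  also have "\<dots> = (K * norm z) ^ N * 2"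
    using suminf_geometric[of "1/2::real"] by (simp add: suminf_mult)
  finally show ?thesis by (simp add: power_mult_distrib mult_ac)
qed

lemma binomial_linear_remainder:
  fixes c :: real and u :: complex
  assumes "norm u \<le> 1 / (2 * max 1 \<bar>c\<bar>)"
  shows "norm ((1 + u) powr complex_of_real c - 1 - complex_of_real c * u)
           \<le> 2 * (max 1 \<bar>c\<bar>)^2 * norm u ^ 2"
proof -
  have "(\<Sum>n<2. (complex_of_real c gchoose n) * u ^ n) = 1 + complex_of_real c * u"
    by (simp add: eval_nat_numeral)
  thus ?thesis using binomial_remainder[OF assms, of 2] by (simp add: algebra_simps)
qed

lemma gchoose_two: "(c::complex) gchoose 2 = c * (c - 1) / 2"
  by (simp add: gbinomial_prod_rev eval_nat_numeral prod.atLeast0_lessThan_Suc)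

lemma gchoose_three: "(c::complex) gchoose 3 = c * (c - 1) * (c - 2) / 6"
  by (simp add: gbinomial_prod_rev eval_nat_numeral prod.atLeast0_lessThan_Suc algebra_simps)

lemma abs_Im_Ln_le:
  fixes u :: complex assumes "norm u \<le> 1/2"
  shows "\<bar>Im (Ln (1 + u))\<bar> \<le> 2 * norm u"
proof -
  have "norm (Ln (1 + u) - u) \<le> norm u ^ 2 / (1 - norm u)"
    using assms by (intro Ln_approx_linear) auto
  also have "\<dots> \<le> norm u"
  proof -
    have "norm u ^ 2 \<le> norm u * (1 - norm u)" using assms
      by (simp add: power2_eq_square mult_left_mono)
    thus ?thesis using assms by (simp add: divide_le_eq)
  qed
  finally have "norm (Ln (1 + u)) \<le> 2 * norm u"
    using norm_triangle_ineq2[of "Ln (1 + u)" u] by linarith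
  thus ?thesis using abs_Im_le_cmod[of "Ln (1 + u)"] by linarith
qed

subsection \<open>Cauchy transforms on the imaginary axis\<close>

lemma kernel_on_circle:
  fixes x y :: real assumes "y > 0"
  shows "norm (\<i> * complex_of_real y * (1 / (\<i> * complex_of_real y - complex_of_real x)) - 1/2) = 1/2"
proof -
  let ?w = "\<i> * complex_of_real y - complex_of_real x"
  have nz: "?w \<noteq> 0"
    using assms by (auto simp: complex_eq_iff)
  have "\<i> * complex_of_real y * (1 / ?w) - 1/2 = (\<i> * complex_of_real y + complex_of_real x) / (2 * ?w)"
    using nz by (simp add: field_simps)
  moreover have "norm (\<i> * complex_of_real y + complex_of_real x) = norm ?w"
    by (simp add: cmod_def)
  moreover have "norm (2 * ?w) = 2 * norm ?w"
    by (simp only: norm_mult) simp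
  ultimately show ?thesis using nz by (simp add: norm_divide)
qed

text \<open>Averaging over a probability measure keeps iy G(iy) in the closed disk.\<close>
lemma cauchy_transform_imag_axis_disk:
  assumes P: "prob_space \<mu>" and S: "sets \<mu> = sets borel" and y: "y > 0"
  shows "norm (\<i> * complex_of_real y * cauchy_transform \<mu> (\<i> * complex_of_real y) - 1/2) \<le> 1/2"
proof -
  interpret prob_space \<mu> by (rule P)
  define f where "f x = 1 / (\<i> * complex_of_real y - complex_of_real x)" for x
  have meas: "f \<in> borel_measurable \<mu>"
    unfolding f_def measurable_cong_sets[OF S refl] by measurable
  have bnd: "norm (f x) \<le> 1 / y" for x
  proof -
    have "y \<le> norm (\<i> * complex_of_real y - complex_of_real x)"
      using abs_Im_le_cmod[of "\<i> * complex_of_real y - complex_of_real x"] y by simp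
    thus ?thesis unfolding f_def using y by (simp add: norm_divide divide_simps)
  qed
  have "integrable \<mu> f"
    by (rule integrable_const_bound[of _ "1/y"]) (use bnd meas in auto)
  hence "\<i> * complex_of_real y * cauchy_transform \<mu> (\<i> * complex_of_real y) - 1/2
      = (\<integral>x. (\<i> * complex_of_real y * f x - 1/2) \<partial>\<mu>)"
    unfolding cauchy_transform_def f_def[symmetric]
    using prob_space by (simp add: integral_mult_right_zero)
  also have "norm \<dots> \<le> (\<integral>x. norm (\<i> * complex_of_real y * f x - 1/2) \<partial>\<mu>)"
    by (rule integral_norm_bound)
  also have "\<dots> = (\<integral>x. 1/2 \<partial>\<mu>)"
    unfolding f_def using kernel_on_circle[OF y] by (intro Bochner_Integration.integral_cong) auto
  also have "\<dots> = 1/2" using prob_space by simp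
  finally show ?thesis .
qed

text \<open>Criterion for escape: |g - 1/2|^2 - 1/4 = Re (g - 1) + |g - 1|^2, so a positive
  right-hand side puts g outside the closed disk |w - 1/2| \<le> 1/2.\<close>
lemma outside_half_disk:
  fixes g :: complex
  assumes "Re (g - 1) + (norm (g - 1))^2 > 0"
  shows "norm (g - 1/2) > 1/2"
proof -
  have "(norm (g - 1/2))^2 - (1/2)^2 = Re (g - 1) + (norm (g - 1))^2"
    by (simp only: cmod_power2) (simp add: power2_eq_square algebra_simps)
  hence "(1/2::real)^2 < (norm (g - 1/2))^2" using assms by linarith
  thus ?thesis by (rule power_less_imp_less_base) simp
qed

subsection \<open>The function G on the imaginary axis\<close>

text \<open>h(t) = r (1 - (1 - t)^(1/r)) / t; on the imaginary axis iy G(iy) = h(t)^(1/alpha).\<close>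
definition hfun :: "real \<Rightarrow> complex \<Rightarrow> complex" where
  "hfun r t = complex_of_real r * (1 - (1 - t) powr complex_of_real (1/r)) / t"

lemma log1_exp:
  assumes "0 \<le> Im L" "Im L < 2 * pi"
  shows "log1 (exp L) = L"
proof (cases "Im L \<le> pi")
  case True
  have "Im (exp L) \<ge> 0" using True assms by (simp add: Im_exp sin_ge_zero)
  moreover have "Ln (exp L) = L" using True assms by (intro Ln_exp) auto
  ultimately show ?thesis by (simp add: log1_def)
next
  case False
  have "sin (Im L) < 0" using False assms by (intro sin_lt_zero) auto
  hence "Im (exp L) < 0" by (simp add: Im_exp mult_pos_neg)
  moreover have "exp L = exp (L - 2 * pi * \<i>)"
    by (simp add: exp_diff)
  moreover have "Ln (exp (L - 2 * pi * \<i>)) = L - 2 * pi * \<i>" using False assms by (intro Ln_exp) auto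
  ultimately show ?thesis by (simp add: log1_def)
qed

text \<open>On the imaginary axis, -1/(iy) = exp L0 with L0 = ln (1/y) + i pi/2 in the strip
  where log1 is exp^(-1); hence (-1/(iy))^alpha = y^(-alpha) e^(i alpha pi/2).\<close>
lemma imag_axis_log:
  fixes \<alpha> y :: real
  assumes y: "y > 0"
  defines "L0 \<equiv> complex_of_real (ln (1/y)) + \<i> * complex_of_real (pi/2)"
  shows "exp L0 = \<i> * complex_of_real (1/y)"
    and "pow1 (- 1 / (\<i> * complex_of_real y)) \<alpha> = exp (complex_of_real \<alpha> * L0)"
    and "exp (complex_of_real \<alpha> * L0)
           = complex_of_real (y powr - \<alpha>) * exp (\<i> * complex_of_real (\<alpha> * pi / 2))"
proof -
  have "exp (\<i> * complex_of_real pi / 2) = \<i>"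
    using cis_pi_half unfolding cis_conv_exp by simp
  thus eL0: "exp L0 = \<i> * complex_of_real (1/y)"
    unfolding L0_def using y by (simp add: exp_add exp_of_real mult.commute)
  have "log1 (exp L0) = L0"
    by (rule log1_exp) (simp_all add: L0_def)
  moreover have "- 1 / (\<i> * complex_of_real y) = exp L0"
    unfolding eL0 using y by (simp add: field_simps)
  ultimately show "pow1 (- 1 / (\<i> * complex_of_real y)) \<alpha> = exp (complex_of_real \<alpha> * L0)"
    unfolding pow1_def by simp
  have "complex_of_real \<alpha> * L0
      = complex_of_real (- \<alpha> * ln y) + \<i> * complex_of_real (\<alpha> * pi / 2)"
    unfolding L0_def using y by (simp add: ln_div algebra_simps)
  thus "exp (complex_of_real \<alpha> * L0)
      = complex_of_real (y powr - \<alpha>) * exp (\<i> * complex_of_real (\<alpha> * pi / 2))"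
    using y by (simp only: exp_add exp_of_real powr_def) simp
qed

text \<open>Closed form of iy G(iy), valid as long as all the branches involved agree with
  the principal ones, which the hypotheses on h guarantee.\<close>
lemma Gasr_imag_axis:
  fixes \<alpha> r y :: real and s :: complex
  assumes y: "y > 0" and a: "0 < \<alpha>" "\<alpha> \<le> 2" and r: "r > 0" and s: "s \<noteq> 0"
  defines "t \<equiv> complex_of_real (y powr - \<alpha>) * (s * exp (\<i> * complex_of_real (\<alpha> * pi / 2)))"
  defines "h \<equiv> hfun r t"
  assumes t1: "1 - t \<noteq> 0" and h0: "h \<noteq> 0" and hA: "\<bar>Im (Ln h)\<bar> < \<alpha> * pi / 2"
  shows "\<i> * complex_of_real y * Gasr \<alpha> s r (\<i> * complex_of_real y) = exp (Ln h / complex_of_real \<alpha>)"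
proof -
  define L0 where "L0 = complex_of_real (ln (1/y)) + \<i> * complex_of_real (pi/2)"
  note eL0 = imag_axis_log(1)[OF y, folded L0_def]
  note w = imag_axis_log(2)[OF y, of \<alpha>, folded L0_def]
  have teq: "t = s * exp (complex_of_real \<alpha> * L0)"
    unfolding t_def imag_axis_log(3)[OF y, of \<alpha>, folded L0_def] by (simp add: mult_ac)
  have t0: "t \<noteq> 0" unfolding teq using s by simp
  have P: "powP (1 - s * exp (complex_of_real \<alpha> * L0)) (1 / r) = (1 - t) powr complex_of_real (1/r)"
    unfolding powP_def teq[symmetric] using t1 by (simp add: powr_def)
  define L where "L = complex_of_real \<alpha> * L0 + Ln h - complex_of_real (ln r)"
  have A: "(1 - (1 - t) powr complex_of_real (1/r)) / s = exp L"
  proof -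
    have "exp L = exp (complex_of_real \<alpha> * L0) * h / complex_of_real r"
      unfolding L_def using h0 r by (simp add: exp_diff exp_add exp_of_real)
    also have "\<dots> = (1 - (1 - t) powr complex_of_real (1/r)) / s"
      unfolding h_def hfun_def using t0 s r by (simp add: teq field_simps)
    finally show ?thesis ..
  qed
  have lgL: "log1 (exp L) = L"
  proof (rule log1_exp)
    have "Im L = \<alpha> * pi / 2 + Im (Ln h)"
      unfolding L_def L0_def by simp
    moreover have "\<alpha> * pi \<le> 2 * pi" using a by (intro mult_right_mono) auto
    moreover have "- (\<alpha> * pi / 2) < Im (Ln h)" "Im (Ln h) < \<alpha> * pi / 2"
      using hA by (auto simp: abs_less_iff)
    ultimately show "0 \<le> Im L" "Im L < 2 * pi" by linarith+
  qed
  have "Gasr \<alpha> s r (\<i> * complex_of_real y)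
      = - complex_of_real (r powr (1 / \<alpha>)) * exp (complex_of_real (1/\<alpha>) * L)"
    unfolding Gasr_def w P A by (simp only: pow1_def lgL)
  also have "exp (complex_of_real (1/\<alpha>) * L)
      = exp L0 * exp (Ln h / complex_of_real \<alpha>) / complex_of_real (exp (ln r / \<alpha>))"
  proof -
    have "complex_of_real (1/\<alpha>) * L = L0 + Ln h / complex_of_real \<alpha> - complex_of_real (ln r / \<alpha>)"
      unfolding L_def using a by (simp add: field_simps)
    thus ?thesis by (simp only: exp_add exp_diff exp_of_real)
  qed
  also have "r powr (1 / \<alpha>) = exp (ln r / \<alpha>)" using r by (simp add: powr_def)
  finally show ?thesis
    unfolding eL0 using y by (simp add: field_simps)
qed

subsection \<open>Expansion of h near 0\<close>

text \<open>h(t) = 1 - a t + b t^2 + O(|t|^3) with explicit constants, from the binomial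
  series of (1 - t)^(1/r) truncated after four terms.\<close>
lemma hfun_expansion:
  fixes r :: real and t :: complex
  assumes r: "0 < r" "r < 1" and t0: "t \<noteq> 0" and tb: "norm t \<le> r / 2"
  defines "a \<equiv> (1/r - 1) / 2" and "b \<equiv> (1/r - 1) * (1/r - 2) / 6"
  shows "norm (hfun r t - 1 + complex_of_real a * t - complex_of_real b * t^2)
          \<le> 2 * (1/r)^4 * r * norm t ^ 3"
proof -
  define p where "p = complex_of_real (1/r)"
  have K: "max 1 \<bar>1/r\<bar> = 1/r" using r by (simp add: field_simps)
  define E where "E = (1 - t) powr p - (\<Sum>n<4. (p gchoose n) * (-t) ^ n)"
  have nE: "norm E \<le> 2 * (1/r) ^ 4 * norm t ^ 4"
    using binomial_remainder[of "-t" "1/r" 4] tb unfolding K E_def p_def by simp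
  have rp: "complex_of_real r * p = 1" unfolding p_def using r by (simp flip: of_real_mult)
  have sum4: "(\<Sum>n<4. f n) = f 0 + f 1 + f 2 + f 3" for f :: "nat \<Rightarrow> complex"
    by (simp add: eval_nat_numeral)
  have S: "(\<Sum>n<4. (p gchoose n) * (-t) ^ n)
      = 1 - p * t + p * (p - 1) / 2 * t^2 - p * (p - 1) * (p - 2) / 6 * t^3"
    unfolding sum4 gchoose_two gchoose_three by (simp add: power2_eq_square power3_eq_cube)
  have "complex_of_real r * (1 - (\<Sum>n<4. (p gchoose n) * (-t) ^ n))
      = (complex_of_real r * p) * (t * (1 - (p - 1) / 2 * t + (p - 1) * (p - 2) / 6 * t^2))"
    unfolding S by (simp add: algebra_simps power2_eq_square power3_eq_cube)
  hence "hfun r t - 1 + complex_of_real a * t - complex_of_real b * t^2 = - complex_of_real r * E / t"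
    unfolding hfun_def E_def a_def b_def p_def[symmetric] rp using t0
    by (simp add: p_def field_simps)
  also have "norm \<dots> = r * norm E / norm t" using r by (simp add: norm_mult norm_divide)
  also have "\<dots> \<le> 2 * (1/r)^4 * r * norm t ^ 3"
  proof -
    have "r * norm E \<le> (2 * (1/r)^4 * r * norm t ^ 3) * norm t"
      using mult_left_mono[OF nE, of r] r by (simp add: eval_nat_numeral mult_ac)
    thus ?thesis using t0 by (simp add: pos_divide_le_eq)
  qed
  finally show ?thesis .
qed

lemma hfun_bounds:
  fixes r :: real and t :: complex
  assumes r: "0 < r" "r < 1" and t0: "t \<noteq> 0" and tb: "norm t \<le> r / 2"
  defines "a \<equiv> (1/r - 1) / 2" and "b \<equiv> (1/r - 1) * (1/r - 2) / 6" and "C \<equiv> 2 * (1/r)^4 * r"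
  shows "norm (hfun r t - 1 + complex_of_real a * t) \<le> (\<bar>b\<bar> + C) * norm t ^ 2"
    and "norm (hfun r t - 1) \<le> (a + \<bar>b\<bar> + C) * norm t"
proof -
  let ?u = "hfun r t - 1"
  have t1: "norm t \<le> 1" using tb r by simp
  have C0: "C \<ge> 0" unfolding C_def using r by simp
  have a0: "a > 0" unfolding a_def using r by (simp add: field_simps)
  have "norm (?u + complex_of_real a * t)
      \<le> norm (?u + complex_of_real a * t - complex_of_real b * t^2) + norm (complex_of_real b * t^2)"
    using norm_triangle_ineq2[of "?u + complex_of_real a * t" "complex_of_real b * t^2"] by linarith
  also have "\<dots> \<le> C * norm t ^ 3 + \<bar>b\<bar> * norm t ^ 2"
    using hfun_expansion[OF r t0 tb, folded a_def b_def C_def] by (simp add: norm_mult norm_power)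
  also have "C * norm t ^ 3 \<le> C * norm t ^ 2"
    using t1 C0 by (intro mult_left_mono power_decreasing) auto
  finally show second: "norm (?u + complex_of_real a * t) \<le> (\<bar>b\<bar> + C) * norm t ^ 2"
    by (simp add: algebra_simps)
  have "norm ?u \<le> norm (?u + complex_of_real a * t) + norm (complex_of_real a * t)"
    using norm_triangle_ineq4[of "?u + complex_of_real a * t" "complex_of_real a * t"] by simp
  also have "\<dots> \<le> (\<bar>b\<bar> + C) * norm t ^ 2 + a * norm t"
    using second a0 by (simp add: norm_mult)
  also have "(\<bar>b\<bar> + C) * norm t ^ 2 \<le> (\<bar>b\<bar> + C) * norm t"
    using t1 C0 by (intro mult_left_mono) (auto simp: power2_eq_square mult_left_le_one_le)
  finally show "norm ?u \<le> (a + \<bar>b\<bar> + C) * norm t" by (simp add: algebra_simps)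
qed

subsection \<open>Escaping the disk\<close>

text \<open>The branch conditions of Gasr_imag_axis hold at t, and the resulting value
  h(t)^(1/alpha) of iy G(iy) lies outside the closed disk |w - 1/2| \<le> 1/2.\<close>
definition escapes :: "real \<Rightarrow> real \<Rightarrow> complex \<Rightarrow> bool" where
  "escapes \<alpha> r t \<longleftrightarrow> 1 - t \<noteq> 0 \<and> hfun r t \<noteq> 0 \<and> \<bar>Im (Ln (hfun r t))\<bar> < \<alpha> * pi / 2 \<and>
     norm (exp (Ln (hfun r t) / complex_of_real \<alpha>) - 1/2) > 1/2"

lemma escapesI:
  fixes \<alpha> r :: real and t :: complex
  defines "g \<equiv> exp (Ln (hfun r t) / complex_of_real \<alpha>)"
  assumes al: "\<alpha> > 0" and t1: "norm t < 1"
    and near: "norm (hfun r t - 1) < min (1/2) (\<alpha> * pi / 8)"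
    and out: "Re (g - 1) + (norm (g - 1))^2 > 0"
  shows "escapes \<alpha> r t"
proof -
  let ?u = "hfun r t - 1"
  have "hfun r t \<noteq> 0"
  proof
    assume "hfun r t = 0"
    hence "?u = -1" by simp
    with near show False by simp
  qed
  moreover have "\<bar>Im (Ln (hfun r t))\<bar> < \<alpha> * pi / 2"
  proof -
    have "\<bar>Im (Ln (1 + ?u))\<bar> \<le> 2 * norm ?u" using near by (intro abs_Im_Ln_le) simp
    moreover have "\<alpha> * pi > 0" using al by simp
    ultimately show ?thesis using near by simp
  qed
  moreover have "1 - t \<noteq> 0" using t1 by auto
  ultimately show ?thesis using outside_half_disk[OF out] unfolding escapes_def g_def by simp
qed

lemma Re_root_lower:
  fixes \<alpha> :: real and u :: complex
  assumes al: "\<alpha> > 0" and u: "norm u \<le> 1 / (2 * max 1 \<bar>1/\<alpha>\<bar>)"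
  shows "Re (exp (Ln (1 + u) / complex_of_real \<alpha>) - 1)
           \<ge> Re u / \<alpha> - 2 * (max 1 \<bar>1/\<alpha>\<bar>)^2 * (norm u)^2"
proof -
  have "1 / (2 * max 1 \<bar>1/\<alpha>\<bar>) \<le> 1 / (2 * 1)" by (intro divide_left_mono) auto
  hence "1 + u \<noteq> 0" using u by (auto simp: add_eq_0_iff)
  hence root: "exp (Ln (1 + u) / complex_of_real \<alpha>) = (1 + u) powr complex_of_real (1/\<alpha>)"
    by (simp add: powr_def field_simps)
  have "Re ((1 + u) powr complex_of_real (1/\<alpha>) - 1)
      = Re ((1 + u) powr complex_of_real (1/\<alpha>) - 1 - complex_of_real (1/\<alpha>) * u) + Re u / \<alpha>"
    by simp
  moreover have "- Re ((1 + u) powr complex_of_real (1/\<alpha>) - 1 - complex_of_real (1/\<alpha>) * u)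
      \<le> 2 * (max 1 \<bar>1/\<alpha>\<bar>)^2 * (norm u)^2"
    using binomial_linear_remainder[OF u] abs_Re_le_cmod[of "(1 + u) powr complex_of_real (1/\<alpha>) - 1 - complex_of_real (1/\<alpha>) * u"]
    by linarith
  ultimately show ?thesis unfolding root by linarith
qed

lemma Re_hfun_root_lower:
  fixes \<alpha> r :: real and t :: complex
  assumes al: "\<alpha> > 0" and r: "0 < r" "r < 1" and t0: "t \<noteq> 0" and tb: "norm t \<le> r / 2"
  defines "a \<equiv> (1/r - 1) / 2" and "b \<equiv> (1/r - 1) * (1/r - 2) / 6" and "C \<equiv> 2 * (1/r)^4 * r"
    and "K \<equiv> max 1 \<bar>1/\<alpha>\<bar>"
  assumes near: "norm (hfun r t - 1) \<le> 1 / (2 * K)"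
  shows "Re (exp (Ln (hfun r t) / complex_of_real \<alpha>) - 1)
           \<ge> - a * Re t / \<alpha> - ((\<bar>b\<bar> + C) / \<alpha> + 2 * K^2 * (a + \<bar>b\<bar> + C)^2) * (norm t)^2"
proof -
  define u where "u = hfun r t - 1"
  note bounds = hfun_bounds[OF r t0 tb, folded a_def b_def C_def u_def]
  have "- Re (u + complex_of_real a * t) \<le> (\<bar>b\<bar> + C) * (norm t)^2"
    using abs_Re_le_cmod[of "u + complex_of_real a * t"] bounds(1) by linarith
  hence "Re u / \<alpha> \<ge> (- a * Re t - (\<bar>b\<bar> + C) * (norm t)^2) / \<alpha>"
    using al by (intro divide_right_mono) simp_all
  moreover have "2 * K^2 * (norm u)^2 \<le> 2 * K^2 * ((a + \<bar>b\<bar> + C) * norm t)^2"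
    using bounds(2) by (intro mult_left_mono power_mono) auto
  moreover have "Re (exp (Ln (1 + u) / complex_of_real \<alpha>) - 1) \<ge> Re u / \<alpha> - 2 * K^2 * (norm u)^2"
    using Re_root_lower[OF al, of u] near unfolding u_def K_def by simp
  moreover have "- a * Re t / \<alpha> - ((\<bar>b\<bar> + C) / \<alpha> + 2 * K^2 * (a + \<bar>b\<bar> + C)^2) * (norm t)^2
      = (- a * Re t - (\<bar>b\<bar> + C) * (norm t)^2) / \<alpha> - 2 * K^2 * ((a + \<bar>b\<bar> + C) * norm t)^2"
    using al by (simp add: field_simps power2_eq_square)
  ultimately show ?thesis unfolding u_def by simp
qed

text \<open>Interior case: h(t)^(1/alpha) escapes for all small t in any closed sector
  c |t| \<le> -Re t (c > 0) around the negative real axis, since there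
  Re (h^(1/alpha) - 1) \<ge> |t| (a c / alpha - D |t|).\<close>
lemma escapes_in_sector:
  fixes \<alpha> r c :: real
  assumes al: "\<alpha> > 0" and r: "0 < r" "r < 1" and c: "c > 0"
  shows "eventually (\<lambda>t. c * norm t \<le> - Re t \<longrightarrow> escapes \<alpha> r t) (at 0)"
proof -
  define a where "a = (1/r - 1) / 2"
  define b where "b = (1/r - 1) * (1/r - 2) / 6"
  define C where "C = 2 * (1/r)^4 * r"
  define K where "K = max 1 \<bar>1/\<alpha>\<bar>"
  define m where "m = min (min (1/2) (\<alpha> * pi / 8)) (1 / (2 * K))"
  define Cu where "Cu = a + \<bar>b\<bar> + C"
  define D where "D = (\<bar>b\<bar> + C) / \<alpha> + 2 * K^2 * Cu^2"
  define \<delta> where "\<delta> = min (r/2) (min (m / Cu) ((a * c / \<alpha>) / (D + 1)))"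
  have a0: "a > 0" unfolding a_def using r by (simp add: field_simps)
  have C0: "C > 0" unfolding C_def using r by simp
  have Cu0: "Cu > 0" unfolding Cu_def using a0 C0 by simp
  have K1: "K \<ge> 1" unfolding K_def by simp
  have m0: "m > 0" unfolding m_def using K1 al by simp
  have D0: "D \<ge> 0" unfolding D_def using al C0 by simp
  have \<delta>0: "\<delta> > 0" unfolding \<delta>_def using r a0 Cu0 m0 D0 al c by simp
  have "escapes \<alpha> r t" if t0: "t \<noteq> 0" and t\<delta>: "norm t < \<delta>" and sector: "c * norm t \<le> - Re t"
    for t :: complex
  proof -
    define g where "g = exp (Ln (hfun r t) / complex_of_real \<alpha>)"
    have tb: "norm t \<le> r / 2" using t\<delta> unfolding \<delta>_def by simp
    have "norm t < m / Cu" using t\<delta> unfolding \<delta>_def by simp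
    hence "Cu * norm t < m" using Cu0 by (simp add: pos_less_divide_eq mult.commute)
    with hfun_bounds(2)[OF r t0 tb, folded a_def b_def C_def Cu_def]
    have near: "norm (hfun r t - 1) < m" by linarith
    have "Re (g - 1) \<ge> - a * Re t / \<alpha> - D * (norm t)^2"
      using Re_hfun_root_lower[OF al r t0 tb] near
      unfolding g_def D_def Cu_def a_def b_def C_def K_def m_def by simp
    moreover have "a * c * norm t \<le> - a * Re t" using mult_left_mono[OF sector, of a] a0 by simp
    hence "a * c * norm t / \<alpha> \<le> - a * Re t / \<alpha>" by (rule divide_right_mono) (use al in simp)
    moreover have "D * (norm t)^2 < a * c * norm t / \<alpha>"
    proof -
      have "norm t < (a * c / \<alpha>) / (D + 1)" using t\<delta> unfolding \<delta>_def min_less_iff_conj by blast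
      moreover have "0 < D + 1" using D0 by simp
      ultimately have "norm t * (D + 1) < a * c / \<alpha>" using pos_less_divide_eq by blast
      hence "norm t * (norm t * (D + 1)) < norm t * (a * c / \<alpha>)"
        by (rule mult_strict_left_mono) (use t0 in simp)
      moreover have "D * (norm t)^2 \<le> norm t * (norm t * (D + 1))"
        by (simp add: power2_eq_square algebra_simps)
      moreover have "norm t * (a * c / \<alpha>) = a * c * norm t / \<alpha>" by simp
      ultimately show ?thesis by linarith
    qed
    ultimately have "Re (g - 1) > 0" by linarith
    hence "Re (g - 1) + (norm (g - 1))^2 > 0" by (simp add: add_pos_nonneg)
    moreover have "norm t < 1" using tb r by simp
    moreover have "norm (hfun r t - 1) < min (1/2) (\<alpha> * pi / 8)"
      using near unfolding m_def by simp
    ultimately show ?thesis unfolding g_def by (intro escapesI al)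
  qed
  thus ?thesis unfolding eventually_at using \<delta>0 by (auto simp: dist_norm)
qed

text \<open>On the imaginary axis t = i sigma the first-order term -a t is purely imaginary,
  and the second-order quantity Re u + |u|^2 ~ (a^2 - b) sigma^2 takes over.\<close>
lemma hfun_imag_axis_lower:
  fixes r \<sigma> :: real
  assumes r: "0 < r" "r < 1" and \<sigma>0: "\<sigma> \<noteq> 0" and \<sigma>b: "\<bar>\<sigma>\<bar> \<le> r / 2"
  defines "a \<equiv> (1/r - 1) / 2" and "b \<equiv> (1/r - 1) * (1/r - 2) / 6" and "C \<equiv> 2 * (1/r)^4 * r"
  defines "u \<equiv> hfun r (\<i> * complex_of_real \<sigma>) - 1"
  shows "Re u + (norm u)^2 \<ge> (a^2 - b) * \<sigma>^2 - C * (1 + 2 * a) * \<bar>\<sigma>\<bar>^3"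
proof -
  define t where "t = \<i> * complex_of_real \<sigma>"
  define e where "e = u + complex_of_real a * t - complex_of_real b * t^2"
  have nt: "norm t = \<bar>\<sigma>\<bar>" unfolding t_def by (simp add: norm_mult)
  have t0: "t \<noteq> 0" unfolding t_def using \<sigma>0 by simp
  have nE: "norm e \<le> C * \<bar>\<sigma>\<bar>^3"
    using hfun_expansion[OF r t0] \<sigma>b nt unfolding e_def u_def t_def[symmetric] a_def b_def C_def
    by simp
  have a0: "a > 0" unfolding a_def using r by (simp add: field_simps)
  have C0: "C > 0" unfolding C_def using r by simp
  have "u = e - \<i> * complex_of_real (a * \<sigma>) - complex_of_real (b * \<sigma>^2)"
    unfolding e_def t_def by (simp add: power2_eq_square algebra_simps)
  hence ReU: "Re u = Re e - b * \<sigma>^2" and ImU: "Im u = Im e - a * \<sigma>" by simp_all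
  have cross: "\<bar>2 * a * \<sigma> * Im e\<bar> \<le> 2 * a * \<bar>\<sigma>\<bar> * norm e"
    using abs_Im_le_cmod[of e] a0 by (simp add: abs_mult mult_left_mono)
  have "Re u + (norm u)^2 \<ge> Re e - b * \<sigma>^2 + (Im e - a * \<sigma>)^2"
    using ReU ImU by (simp add: cmod_power2)
  moreover have "(Im e - a * \<sigma>)^2 \<ge> a^2 * \<sigma>^2 - 2 * a * \<bar>\<sigma>\<bar> * norm e"
  proof -
    have "(Im e - a * \<sigma>)^2 = (Im e)^2 - 2 * a * \<sigma> * Im e + a^2 * \<sigma>^2"
      by (simp add: power2_eq_square algebra_simps)
    moreover have "(Im e)^2 \<ge> 0" by simp
    ultimately show ?thesis using cross by linarith
  qed
  moreover have "norm e * (1 + 2 * a * \<bar>\<sigma>\<bar>) \<le> C * \<bar>\<sigma>\<bar>^3 * (1 + 2 * a)"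
  proof (rule mult_mono)
    show "1 + 2 * a * \<bar>\<sigma>\<bar> \<le> 1 + 2 * a" using \<sigma>b r a0 by simp
  qed (use nE a0 C0 in auto)
  hence "norm e + 2 * a * \<bar>\<sigma>\<bar> * norm e \<le> C * (1 + 2 * a) * \<bar>\<sigma>\<bar>^3"
    by (simp add: algebra_simps)
  moreover have "(a^2 - b) * \<sigma>^2 = a^2 * \<sigma>^2 - b * \<sigma>^2" by (simp add: algebra_simps)
  ultimately show ?thesis
    using abs_Re_le_cmod[of e] by linarith
qed

text \<open>Boundary case alpha = 1: h(t) escapes for all small purely imaginary t, because
  a^2 - b = (1/r^2 - 1)/12 > 0.\<close>
lemma escapes_on_imag_axis:
  fixes r :: real
  assumes r: "0 < r" "r < 1"
  shows "eventually (\<lambda>t. Re t = 0 \<longrightarrow> escapes 1 r t) (at 0)"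
proof -
  define a where "a = (1/r - 1) / 2"
  define b where "b = (1/r - 1) * (1/r - 2) / 6"
  define C where "C = 2 * (1/r)^4 * r"
  define Cu where "Cu = a + \<bar>b\<bar> + C"
  define Cb where "Cb = C * (1 + 2 * a)"
  define \<delta> where "\<delta> = min (r/2) (min (1 / (4 * Cu)) ((a^2 - b) / Cb))"
  have a0: "a > 0" unfolding a_def using r by (simp add: field_simps)
  have C0: "C > 0" unfolding C_def using r by simp
  have Cu0: "Cu > 0" unfolding Cu_def using a0 C0 by simp
  have Cb0: "Cb > 0" unfolding Cb_def using a0 C0 by simp
  have "a^2 - b = (1/r - 1) * (1/r + 1) / 12"
    unfolding a_def b_def using r by (simp add: field_simps power2_eq_square)
  moreover have "(1/r - 1) * (1/r + 1) > 0"
  proof -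
    have "1/r > 1" using r by simp
    thus ?thesis by (intro mult_pos_pos) linarith+
  qed
  ultimately have \<gamma>0: "a^2 - b > 0" by simp
  have \<delta>0: "\<delta> > 0" unfolding \<delta>_def using r Cu0 Cb0 \<gamma>0 by simp
  have "escapes 1 r t" if t0: "t \<noteq> 0" and t\<delta>: "norm t < \<delta>" and imag: "Re t = 0" for t :: complex
  proof -
    define \<sigma> where "\<sigma> = Im t"
    define u where "u = hfun r t - 1"
    have t\<sigma>: "t = \<i> * complex_of_real \<sigma>" unfolding \<sigma>_def using imag by (simp add: complex_eq_iff)
    have nt: "norm t = \<bar>\<sigma>\<bar>" unfolding t\<sigma> by (simp add: norm_mult)
    have \<sigma>0: "\<sigma> \<noteq> 0" using t0 t\<sigma> by auto
    have tb: "norm t \<le> r / 2" using t\<delta> unfolding \<delta>_def by simp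
    have "norm t < 1 / (4 * Cu)" using t\<delta> unfolding \<delta>_def by simp
    hence "Cu * norm t < 1/4" using Cu0 by (simp add: pos_less_divide_eq mult_ac)
    with hfun_bounds(2)[OF r t0 tb, folded a_def b_def C_def Cu_def u_def]
    have u4: "norm u < 1/4" by linarith
    have "\<bar>\<sigma>\<bar> < (a^2 - b) / Cb" using t\<delta> nt unfolding \<delta>_def by simp
    hence "Cb * \<bar>\<sigma>\<bar> < a^2 - b" using Cb0 by (simp add: pos_less_divide_eq mult.commute)
    hence "Cb * \<bar>\<sigma>\<bar> * \<sigma>^2 < (a^2 - b) * \<sigma>^2" using \<sigma>0 by simp
    hence "Cb * \<bar>\<sigma>\<bar>^3 < (a^2 - b) * \<sigma>^2" by (simp add: power2_eq_square power3_eq_cube)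
    with hfun_imag_axis_lower[OF r \<sigma>0, folded a_def b_def C_def Cb_def t\<sigma>]
    have "Re u + (norm u)^2 > 0" using tb nt unfolding u_def by linarith
    moreover have "hfun r t \<noteq> 0" using u4 unfolding u_def by auto
    hence "exp (Ln (hfun r t) / complex_of_real 1) - 1 = u" unfolding u_def by simp
    moreover have "norm t < 1" using tb r by simp
    moreover have "norm (hfun r t - 1) < min (1/2) (1 * pi / 8)"
      using u4 pi_gt3 unfolding u_def by simp
    ultimately show ?thesis by (intro escapesI) simp_all
  qed
  thus ?thesis unfolding eventually_at using \<delta>0 by (auto simp: dist_norm)
qed

subsection \<open>The admissible directions\<close>

text \<open>For admissible (alpha, s), tau = s e^(i alpha pi/2) = |s| e^(i x) has
  x = Arg s + alpha pi/2 in [pi/2, 3pi/2], with x an endpoint only if alpha = 1.\<close>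
lemma admissible_direction:
  assumes adm: "admissible \<alpha> s"
  defines "\<tau> \<equiv> s * exp (\<i> * complex_of_real (\<alpha> * pi / 2))"
  shows "Re \<tau> < 0 \<or> (\<alpha> = 1 \<and> Re \<tau> = 0)"
proof -
  define x where "x = Arg s + \<alpha> * pi / 2"
  have "\<tau> = complex_of_real (cmod s) * cis x"
  proof -
    have "s = complex_of_real (cmod s) * cis (Arg s)" by (metis rcis_cmod_Arg rcis_def)
    moreover have "exp (\<i> * complex_of_real (\<alpha> * pi / 2)) = cis (\<alpha> * pi / 2)"
      by (simp add: cis_conv_exp)
    ultimately show ?thesis unfolding \<tau>_def x_def by (metis cis_mult mult.assoc)
  qed
  hence Re\<tau>: "Re \<tau> = cmod s * cos x" by simp
  have s0: "cmod s > 0" using adm unfolding admissible_def by simp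
  have range: "pi/2 \<le> x" "x \<le> 3 * pi / 2" and strict: "\<alpha> \<noteq> 1 \<Longrightarrow> pi/2 < x \<and> x < 3 * pi / 2"
  proof -
    consider "pi - \<alpha> * pi \<le> Arg s" "Arg s \<le> pi" "0 < \<alpha> * pi" "\<alpha> * pi \<le> pi"
        "\<alpha> \<noteq> 1 \<Longrightarrow> \<alpha> * pi < pi"
      | "0 \<le> Arg s" "Arg s \<le> 2 * pi - \<alpha> * pi" "pi < \<alpha> * pi"
      using adm unfolding admissible_def by (fastforce simp: algebra_simps)
    thus "pi/2 \<le> x" "x \<le> 3 * pi / 2" "\<alpha> \<noteq> 1 \<Longrightarrow> pi/2 < x \<and> x < 3 * pi / 2"
      unfolding x_def by (cases; fastforce)+
  qed
  have "cos (x - pi) \<ge> 0" using range by (intro cos_ge_zero) simp_all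
  hence "Re \<tau> \<le> 0" unfolding Re\<tau> using s0 by (simp add: mult_nonneg_nonpos)
  moreover have "Re \<tau> < 0" if "\<alpha> \<noteq> 1"
  proof -
    have "cos x < 0" using strict[OF that] by (intro cos_lt_zero_pi) simp_all
    thus ?thesis unfolding Re\<tau> using s0 by (simp add: mult_pos_neg)
  qed
  ultimately show ?thesis by linarith
qed

lemma eventually_escapes:
  assumes r: "0 < r" "r < 1" and adm: "admissible \<alpha> s"
  defines "\<tau> \<equiv> s * exp (\<i> * complex_of_real (\<alpha> * pi / 2))"
  shows "eventually (\<lambda>\<epsilon>. escapes \<alpha> r (complex_of_real \<epsilon> * \<tau>)) (at_right 0)"
proof -
  have \<tau>0: "\<tau> \<noteq> 0" and al: "\<alpha> > 0" using adm unfolding admissible_def \<tau>_def by auto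
  have pos: "eventually (\<lambda>\<epsilon>::real. \<epsilon> > 0) (at_right 0)" by (rule eventually_at_right_less)
  have "((\<lambda>\<epsilon>. complex_of_real \<epsilon> * \<tau>) \<longlongrightarrow> complex_of_real 0 * \<tau>) (at_right 0)"
    by (intro tendsto_intros)
  moreover have "eventually (\<lambda>\<epsilon>. complex_of_real \<epsilon> * \<tau> \<noteq> 0) (at_right 0)"
    using pos by eventually_elim (use \<tau>0 in simp)
  ultimately have ray: "filterlim (\<lambda>\<epsilon>. complex_of_real \<epsilon> * \<tau>) (at 0) (at_right 0)"
    by (intro filterlim_atI) simp_all
  from admissible_direction[OF adm, folded \<tau>_def] show ?thesis
  proof
    assume Re\<tau>: "Re \<tau> < 0"
    define c where "c = - Re \<tau> / norm \<tau>"
    have c0: "c > 0" unfolding c_def using Re\<tau> \<tau>0 by (intro divide_pos_pos) simp_all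
    have "eventually (\<lambda>\<epsilon>. c * norm (complex_of_real \<epsilon> * \<tau>) \<le> - Re (complex_of_real \<epsilon> * \<tau>)
        \<longrightarrow> escapes \<alpha> r (complex_of_real \<epsilon> * \<tau>)) (at_right 0)"
      using eventually_compose_filterlim[OF escapes_in_sector[OF al r c0] ray] .
    thus ?thesis using pos
      by eventually_elim (use \<tau>0 in \<open>simp add: c_def norm_mult\<close>)
  next
    assume "\<alpha> = 1 \<and> Re \<tau> = 0"
    thus ?thesis using eventually_compose_filterlim[OF escapes_on_imag_axis[OF r] ray] by simp
  qed
qed

lemma escapes_for_large_y:
  assumes r: "0 < r" "r < 1" and adm: "admissible \<alpha> s"
  shows "eventually (\<lambda>y. escapes \<alpha> r
           (complex_of_real (y powr - \<alpha>) * (s * exp (\<i> * complex_of_real (\<alpha> * pi / 2))))) at_top"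
proof -
  have "- \<alpha> < 0" using adm unfolding admissible_def by auto
  hence "filterlim (\<lambda>y::real. y powr - \<alpha>) (at_right 0) at_top"
    using tendsto_neg_powr[OF _ filterlim_ident] eventually_gt_at_top[of 0]
    by (intro tendsto_imp_filterlim_at_right) (auto elim: eventually_mono)
  thus ?thesis by (rule eventually_compose_filterlim[OF eventually_escapes[OF r adm]])
qed

theorem mainTheorem3:
  fixes \<alpha> r \<eta> :: real and s :: complex
  assumes "0 < r" "r < 1" "admissible \<alpha> s" "\<eta> > 0"
  shows "\<not> (\<exists>(\<mu>::real measure) M. prob_space \<mu> \<and> sets \<mu> = sets borel \<and> M > 0 \<and>
            (\<forall>z \<in> Gamma_cone \<eta> M. cauchy_transform \<mu> z = Gasr \<alpha> s r z))"
proof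
  assume "\<exists>(\<mu>::real measure) M. prob_space \<mu> \<and> sets \<mu> = sets borel \<and> M > 0 \<and>
            (\<forall>z \<in> Gamma_cone \<eta> M. cauchy_transform \<mu> z = Gasr \<alpha> s r z)"
  then obtain \<mu> M where P: "prob_space \<mu>" and S: "sets \<mu> = sets borel" and M: "M > 0"
    and eq: "\<forall>z \<in> Gamma_cone \<eta> M. cauchy_transform \<mu> z = Gasr \<alpha> s r z" by blast
  have s0: "s \<noteq> 0" and al: "0 < \<alpha>" "\<alpha> \<le> 2" using assms(3) unfolding admissible_def by auto
  define \<tau> where "\<tau> = s * exp (\<i> * complex_of_real (\<alpha> * pi / 2))"
  have "eventually (\<lambda>y. escapes \<alpha> r (complex_of_real (y powr - \<alpha>) * \<tau>) \<and> y > M) at_top"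
    using escapes_for_large_y[OF assms(1-3)] eventually_gt_at_top unfolding \<tau>_def
    by (rule eventually_conj)
  hence "\<exists>y. escapes \<alpha> r (complex_of_real (y powr - \<alpha>) * \<tau>) \<and> y > M"
    by (rule eventually_happens'[rotated]) simp
  then obtain y where esc: "escapes \<alpha> r (complex_of_real (y powr - \<alpha>) * \<tau>)" and yM: "y > M"
    by blast
  have y0: "y > 0" using yM M by simp
  have "\<i> * complex_of_real y \<in> Gamma_cone \<eta> M" unfolding Gamma_cone_def using yM y0 by simp
  hence "\<i> * complex_of_real y * Gasr \<alpha> s r (\<i> * complex_of_real y) =
      \<i> * complex_of_real y * cauchy_transform \<mu> (\<i> * complex_of_real y)" using eq by simp
  moreover note Gasr_imag_axis[OF y0 al assms(1) s0, folded \<tau>_def]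
  ultimately show False
    using esc cauchy_transform_imag_axis_disk[OF P S y0] unfolding escapes_def by auto
qed

end
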